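(* Let $(\vartheta_n)_{n\ge0}$ be a submartingale with $\vartheta_n\in[0,1]$ for all $n$, and let $\vartheta_\infty$ be its almost sure limit. Let $S=\{0,1\}$ and let $\xi_n$ be the random probability measure on $S$ with $\xi_n(\{1\})=\vartheta_n$, $\xi_n(\{0\})=1-\vartheta_n$. If $\boldsymbol X=(X_0,X_1,\dots)$ is a sequence of $S$-valued random variables having $\boldsymbol\xi=(\xi_0,\xi_1,\dots)$ as a product disintegration, then \[ \lim_{n\to\infty}\frac1n\sum_{i=0}^{n-1}\mathbb 1_{\{X_i=1\}}=\vartheta_\infty\quad\text{almost surely.} \]
   Context: A sequence $\boldsymbol\xi$ of random probability measures on $S$ is a product disintegration of $\boldsymbol X$ if, with probability one, $\mathbb{P}[X_0\in A_0,\dots,X_n\in A_n\mid \boldsymbol{\xi}] = \xi_0(A_0)\cdots\xi_n(A_n)$ holds simultaneously for every $n\ge 0$ and all subsets $A_0,\dots,A_n$ of $S$ (conditioning on $\sigma(\boldsymbol\xi)$). *)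

theory Defs
  imports "HOL-Probability.Probability"
begin

definition submartingale :: "'a measure \<Rightarrow> (nat \<Rightarrow> 'a measure) \<Rightarrow> (nat \<Rightarrow> 'a \<Rightarrow> real) \<Rightarrow> bool" where
  "submartingale M F Y \<longleftrightarrow>
     (\<forall>n. subalgebra M (F n)) \<and>
     (\<forall>n m. n \<le> m \<longrightarrow> sets (F n) \<subseteq> sets (F m)) \<and>
     (\<forall>n. Y n \<in> borel_measurable (F n)) \<and>
     (\<forall>n. integrable M (Y n)) \<and>
     (\<forall>n. AE x in M. Y n x \<le> real_cond_exp M (F n) (Y (Suc n)) x)"

definition sigma_rm :: "'a measure \<Rightarrow> 'b set \<Rightarrow> (nat \<Rightarrow> 'a \<Rightarrow> 'b set \<Rightarrow> real) \<Rightarrow> 'a measure" where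
  "sigma_rm M S \<xi> = sigma (space M)
     {(\<lambda>x. \<xi> n x A) -` B \<inter> space M | n A B. A \<subseteq> S \<and> B \<in> sets borel}"

definition product_disintegration ::
  "'a measure \<Rightarrow> 'b set \<Rightarrow> (nat \<Rightarrow> 'a \<Rightarrow> 'b) \<Rightarrow> (nat \<Rightarrow> 'a \<Rightarrow> 'b set \<Rightarrow> real) \<Rightarrow> bool" where
  "product_disintegration M S X \<xi> \<longleftrightarrow>
     (AE x in M. \<forall>n. \<forall>A :: nat \<Rightarrow> 'b set. (\<forall>i\<le>n. A i \<subseteq> S) \<longrightarrow>
        real_cond_exp M (sigma_rm M S \<xi>)
          (indicator {y \<in> space M. \<forall>i\<le>n. X i y \<in> A i}) x
        = (\<Prod>i\<le>n. \<xi> i x (A i)))"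

definition bern_rm :: "(nat \<Rightarrow> 'a \<Rightarrow> real) \<Rightarrow> nat \<Rightarrow> 'a \<Rightarrow> nat set \<Rightarrow> real" where
  "bern_rm \<theta> n x A = (if (1::nat) \<in> A then \<theta> n x else 0) + (if (0::nat) \<in> A then 1 - \<theta> n x else 0)"

end

theory Submission
  imports Defs "HOL-Library.Discrete_Functions"
begin

text \<open>
  Put \<open>Y\<^sub>i = \<one>{X\<^sub>i = 1} - \<theta>\<^sub>i\<close>. Conditionally on \<open>\<sigma>(\<xi>)\<close> the \<open>X\<^sub>i\<close> are independent with
  \<open>P(X\<^sub>i = 1) = \<theta>\<^sub>i\<close>, and the \<open>\<theta>\<^sub>i\<close> are \<open>\<sigma>(\<xi>)\<close>-measurable, so the \<open>Y\<^sub>i\<close> are pairwise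
  orthogonal and bounded by 1. Hence \<open>E[(Y\<^sub>0 + \<dots> + Y\<^sub>n\<^sub>-\<^sub>1)\<^sup>2] \<le> n\<close>, the averages along the squares
  \<open>n = k\<^sup>2\<close> have summable second moments and tend to 0 almost surely, and boundedness of the
  \<open>Y\<^sub>i\<close> fills the gaps between consecutive squares. Finally the Cesaro means of \<open>\<theta>\<^sub>i\<close>
  converge to \<open>\<theta>\<^sub>\<infinity>\<close>.
\<close>

lemma cesaro_mean_tendsto_zero:
  fixes b :: "nat \<Rightarrow> real"
  assumes "b \<longlonglongrightarrow> 0"
  shows "(\<lambda>n. (\<Sum>i<n. b i) / real n) \<longlonglongrightarrow> 0"
proof (rule LIMSEQ_I)
  fix r :: real assume r: "r > 0"
  obtain N where N: "\<And>n. n \<ge> N \<Longrightarrow> \<bar>b n\<bar> < r / 2"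
    using LIMSEQ_D[OF assms, of "r / 2"] r by auto
  define C where "C = (\<Sum>i<N. \<bar>b i\<bar>)"
  show "\<exists>n0. \<forall>n\<ge>n0. norm ((\<Sum>i<n. b i) / real n - 0) < r"
  proof (intro exI allI impI)
    fix n assume n: "n \<ge> max (N + 1) (nat \<lceil>2 * C / r\<rceil> + 1)"
    hence "n \<ge> N" and n_pos: "real n > 0" and "real n > 2 * C / r"
      by linarith+
    hence nC: "C < real n * (r / 2)" using r by (simp add: field_simps)
    have split: "{..<n} = {..<N} \<union> {N..<n}" using \<open>n \<ge> N\<close> by auto
    have "\<bar>\<Sum>i<n. b i\<bar> \<le> (\<Sum>i<n. \<bar>b i\<bar>)" by (rule sum_abs)
    also have "\<dots> = C + (\<Sum>i\<in>{N..<n}. \<bar>b i\<bar>)"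
      unfolding C_def split by (subst sum.union_disjoint) auto
    also have "(\<Sum>i\<in>{N..<n}. \<bar>b i\<bar>) \<le> (\<Sum>i\<in>{N..<n}. r / 2)"
      using N by (intro sum_mono) (simp add: less_imp_le)
    also have "\<dots> \<le> real n * (r / 2)" using r by simp
    finally have "\<bar>\<Sum>i<n. b i\<bar> < real n * r" using nC by linarith
    thus "norm ((\<Sum>i<n. b i) / real n - 0) < r"
      using n_pos by (simp add: field_simps)
  qed
qed

lemma cesaro_mean_tendsto:
  fixes a :: "nat \<Rightarrow> real"
  assumes "a \<longlonglongrightarrow> L"
  shows "(\<lambda>n. (\<Sum>i<n. a i) / real n) \<longlonglongrightarrow> L"
proof -
  have "(\<lambda>n. (\<Sum>i<n. a i - L) / real n + L) \<longlonglongrightarrow> 0 + L"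
    using assms by (intro tendsto_add cesaro_mean_tendsto_zero) (simp_all add: LIM_zero)
  moreover have "\<forall>\<^sub>F n in sequentially. (\<Sum>i<n. a i - L) / real n + L = (\<Sum>i<n. a i) / real n"
    using eventually_gt_at_top[of 0] by eventually_elim (simp add: sum_subtractf field_simps)
  ultimately show ?thesis by (simp add: Lim_transform_eventually)
qed

lemma filterlim_floor_sqrt_at_top: "filterlim floor_sqrt at_top sequentially"
  unfolding filterlim_at_top
  using eventually_ge_at_top le_floor_sqrtI by (metis (mono_tags) eventually_mono)

lemma abs_mean_le_mean_floor_sqrt:
  fixes Y :: "nat \<Rightarrow> real"
  assumes bound: "\<And>i. \<bar>Y i\<bar> \<le> 1" and "n > 0"
  defines "k \<equiv> floor_sqrt n"
  shows "\<bar>(\<Sum>i<n. Y i) / real n\<bar> \<le> \<bar>(\<Sum>i<k^2. Y i) / real (k^2)\<bar> + 2 / real k"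
proof -
  have k_pos: "k > 0" and kn: "k^2 \<le> n" and nk: "n < (Suc k)^2"
    using \<open>n > 0\<close> Suc_floor_sqrt_power2_gt by (simp_all add: k_def)
  have split: "{..<n} = {..<k^2} \<union> {k^2..<n}" using kn by auto
  have "(\<Sum>i<n. Y i) = (\<Sum>i<k^2. Y i) + (\<Sum>i\<in>{k^2..<n}. Y i)"
    unfolding split by (subst sum.union_disjoint) auto
  moreover have "\<bar>\<Sum>i\<in>{k^2..<n}. Y i\<bar> \<le> 2 * real k"
  proof -
    have "\<bar>\<Sum>i\<in>{k^2..<n}. Y i\<bar> \<le> (\<Sum>i\<in>{k^2..<n}. \<bar>Y i\<bar>)" by (rule sum_abs)
    also have "\<dots> \<le> (\<Sum>i\<in>{k^2..<n}. 1)" using bound by (intro sum_mono)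
    also have "\<dots> = real (n - k^2)" by simp
    also have "n - k^2 \<le> 2 * k" using nk by (simp add: power2_eq_square)
    finally show ?thesis by simp
  qed
  ultimately have "\<bar>\<Sum>i<n. Y i\<bar> \<le> \<bar>\<Sum>i<k^2. Y i\<bar> + 2 * real k" by linarith
  hence "\<bar>(\<Sum>i<n. Y i) / real n\<bar> \<le> (\<bar>\<Sum>i<k^2. Y i\<bar> + 2 * real k) / real (k^2)"
    using kn k_pos by (simp add: frac_le del: of_nat_power)
  also have "\<dots> = \<bar>(\<Sum>i<k^2. Y i) / real (k^2)\<bar> + 2 / real k"
    using k_pos by (simp add: add_divide_distrib power2_eq_square)
  finally show ?thesis .
qed

lemma mean_tendsto_zero_of_mean_squares:
  fixes Y :: "nat \<Rightarrow> real"
  assumes bound: "\<And>i. \<bar>Y i\<bar> \<le> 1"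
    and squares: "(\<lambda>k. (\<Sum>i<k^2. Y i) / real (k^2)) \<longlonglongrightarrow> 0"
  shows "(\<lambda>n. (\<Sum>i<n. Y i) / real n) \<longlonglongrightarrow> 0"
proof (rule Lim_null_comparison)
  define g where "g k = \<bar>(\<Sum>i<k^2. Y i) / real (k^2)\<bar> + 2 / real k" for k
  have "g \<longlonglongrightarrow> 0 + 0"
    unfolding g_def by (intro tendsto_add tendsto_rabs_zero squares lim_const_over_n)
  thus "(\<lambda>n. g (floor_sqrt n)) \<longlonglongrightarrow> 0"
    using filterlim_compose filterlim_floor_sqrt_at_top by fastforce
  show "\<forall>\<^sub>F n in sequentially. norm ((\<Sum>i<n. Y i) / real n) \<le> g (floor_sqrt n)"
    using eventually_gt_at_top[of 0]
    by eventually_elim (simp only: g_def real_norm_def abs_mean_le_mean_floor_sqrt[OF bound])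
qed

lemma space_sigma_rm [simp]: "space (sigma_rm M S \<xi>) = space M"
  unfolding sigma_rm_def by (rule space_measure_of) blast

lemma sets_sigma_rm:
  "sets (sigma_rm M S \<xi>) = sigma_sets (space M)
     {(\<lambda>x. \<xi> n x A) -` B \<inter> space M | n A B. A \<subseteq> S \<and> B \<in> sets borel}"
  unfolding sigma_rm_def by (rule sets_measure_of) blast

lemma measurable_sigma_rm:
  assumes "A \<subseteq> S"
  shows "(\<lambda>x. \<xi> n x A) \<in> borel_measurable (sigma_rm M S \<xi>)"
  by (rule measurableI) (use assms in \<open>auto simp: sets_sigma_rm\<close>)

lemma subalgebra_sigma_rm:
  assumes "\<And>n A. A \<subseteq> S \<Longrightarrow> (\<lambda>x. \<xi> n x A) \<in> borel_measurable M"
  shows "subalgebra M (sigma_rm M S \<xi>)"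
  unfolding subalgebra_def sets_sigma_rm
  by (auto intro!: sets.sigma_sets_subset measurable_sets assms)

lemma measurable_sigma_rm_bern_rm:
  "\<theta> n \<in> borel_measurable (sigma_rm M {0, 1} (bern_rm \<theta>))"
  using measurable_sigma_rm[of "{1}" "{0, 1}" "bern_rm \<theta>" n M] by (simp add: bern_rm_def)

lemma (in finite_measure) integral_mult_product_disintegration:
  assumes PD: "product_disintegration M S X \<xi>"
    and \<xi>_meas: "\<And>n A. A \<subseteq> S \<Longrightarrow> (\<lambda>x. \<xi> n x A) \<in> borel_measurable M"
    and X_meas: "\<And>i. X i \<in> measurable M (count_space UNIV)"
    and Z_meas: "Z \<in> borel_measurable (sigma_rm M S \<xi>)"
    and Z_bound: "\<And>x. x \<in> space M \<Longrightarrow> \<bar>Z x\<bar> \<le> B"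
    and A: "\<And>i. i \<le> n \<Longrightarrow> A i \<subseteq> S"
  shows "(\<integral>x. Z x * indicator {y \<in> space M. \<forall>i\<le>n. X i y \<in> A i} x \<partial>M)
       = (\<integral>x. Z x * (\<Prod>i\<le>n. \<xi> i x (A i)) \<partial>M)"
proof -
  let ?G = "sigma_rm M S \<xi>"
  let ?f = "indicator {y \<in> space M. \<forall>i\<le>n. X i y \<in> A i} :: 'a \<Rightarrow> real"
  interpret finite_measure_subalgebra M ?G
    by unfold_locales (rule subalgebra_sigma_rm[OF \<xi>_meas])
  have Z_meas_M: "Z \<in> borel_measurable M"
    by (rule measurable_from_subalg[OF subalg Z_meas])
  have "{y \<in> space M. X i y \<in> A i} \<in> sets M" for i
    using measurable_sets[OF X_meas, of "A i" i] by (simp add: vimage_def Int_def conj_commute)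
  hence "{y \<in> space M. \<forall>i\<in>{..n}. X i y \<in> A i} \<in> sets M"
    by (intro sets.sets_Collect_finite_All') auto
  hence f_meas: "?f \<in> borel_measurable M"
    unfolding Ball_def atMost_iff by (rule borel_measurable_indicator)
  have prod_meas: "(\<lambda>x. \<Prod>i\<le>n. \<xi> i x (A i)) \<in> borel_measurable M"
    using \<xi>_meas A by (intro borel_measurable_prod) auto
  have "integrable M (\<lambda>x. Z x * ?f x)"
  proof (rule integrable_const_bound[where B = B])
    show "AE x in M. norm (Z x * ?f x) \<le> B"
      by (intro AE_I2) (simp add: abs_mult indicator_def Z_bound order_trans[OF abs_ge_zero Z_bound])
  qed (intro borel_measurable_times Z_meas_M f_meas)
  hence "(\<integral>x. Z x * ?f x \<partial>M) = (\<integral>x. Z x * real_cond_exp M ?G ?f x \<partial>M)"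
    by (rule real_cond_exp_intg(2)[OF _ Z_meas f_meas, symmetric])
  also have "\<dots> = (\<integral>x. Z x * (\<Prod>i\<le>n. \<xi> i x (A i)) \<partial>M)"
  proof (rule integral_cong_AE)
    show "(\<lambda>x. Z x * real_cond_exp M ?G ?f x) \<in> borel_measurable M"
      by (intro borel_measurable_times Z_meas_M measurable_from_subalg[OF subalg borel_measurable_cond_exp])
    show "AE x in M. Z x * real_cond_exp M ?G ?f x = Z x * (\<Prod>i\<le>n. \<xi> i x (A i))"
      using PD unfolding product_disintegration_def by eventually_elim (simp add: A)
  qed (intro borel_measurable_times Z_meas_M prod_meas)
  finally show ?thesis .
qed

lemma (in finite_measure) integral_mult_prod_indicator_bern_rm:
  assumes PD: "product_disintegration M {0, 1} X (bern_rm \<theta>)"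
    and [measurable]: "\<And>n. \<theta> n \<in> borel_measurable M"
    and X_meas: "\<And>i. X i \<in> measurable M (count_space UNIV)"
    and X_01: "\<And>i x. x \<in> space M \<Longrightarrow> X i x \<in> {0, 1}"
    and Z_meas: "Z \<in> borel_measurable (sigma_rm M {0, 1} (bern_rm \<theta>))"
    and Z_bound: "\<And>x. x \<in> space M \<Longrightarrow> \<bar>Z x\<bar> \<le> B"
    and "finite T"
  shows "(\<integral>x. Z x * (\<Prod>i\<in>T. indicator {y. X i y = 1} x) \<partial>M) = (\<integral>x. Z x * (\<Prod>i\<in>T. \<theta> i x) \<partial>M)"
proof -
  obtain N where T: "T \<subseteq> {..N}"
    using \<open>finite T\<close> finite_nat_iff_bounded_le by auto
  \<comment> \<open>Constraining \<open>X\<^sub>i\<close> to \<open>{0, 1}\<close> for \<open>i \<notin> T\<close> is no constraint, and \<open>\<xi>\<^sub>i({0, 1}) = 1\<close>.\<close>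
  define A where "A i = (if i \<in> T then {1} else {0, 1 :: nat})" for i
  have ind_eq: "(\<Prod>i\<in>T. indicator {y. X i y = 1} x)
      = (indicator {y \<in> space M. \<forall>i\<le>N. X i y \<in> A i} x :: real)" if "x \<in> space M" for x
  proof -
    have "(\<Prod>i\<in>T. indicator {y. X i y = 1} x) = (of_bool (\<forall>i\<in>T. X i x = 1) :: real)"
      using \<open>finite T\<close> by (induction T rule: finite_induct) auto
    also have "(\<forall>i\<in>T. X i x = 1) \<longleftrightarrow> (\<forall>i\<le>N. X i x \<in> A i)"
      using T X_01[OF that] by (auto simp: A_def)
    also have "of_bool (\<forall>i\<le>N. X i x \<in> A i) = indicator {y \<in> space M. \<forall>i\<le>N. X i y \<in> A i} x"
      using that by (simp add: indicator_def)
    finally show ?thesis .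
  qed
  have prod_eq: "(\<Prod>i\<le>N. bern_rm \<theta> i x (A i)) = (\<Prod>i\<in>T. \<theta> i x)" for x
  proof -
    have "(\<Prod>i\<le>N. bern_rm \<theta> i x (A i)) = (\<Prod>i\<le>N. if i \<in> T then \<theta> i x else 1)"
      by (intro prod.cong) (auto simp: A_def bern_rm_def)
    also have "\<dots> = (\<Prod>i\<in>T. \<theta> i x)"
      using T by (simp add: prod.If_cases Int_absorb1)
    finally show ?thesis .
  qed
  have bern_meas: "(\<lambda>x. bern_rm \<theta> n x S) \<in> borel_measurable M" for n S
    unfolding bern_rm_def by measurable
  have "(\<integral>x. Z x * (\<Prod>i\<in>T. indicator {y. X i y = 1} x) \<partial>M)
      = (\<integral>x. Z x * indicator {y \<in> space M. \<forall>i\<le>N. X i y \<in> A i} x \<partial>M)"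
    by (rule Bochner_Integration.integral_cong[OF refl]) (simp only: ind_eq)
  also have "\<dots> = (\<integral>x. Z x * (\<Prod>i\<le>N. bern_rm \<theta> i x (A i)) \<partial>M)"
    by (rule integral_mult_product_disintegration[OF PD bern_meas X_meas Z_meas Z_bound])
       (auto simp: A_def)
  also have "\<dots> = (\<integral>x. Z x * (\<Prod>i\<in>T. \<theta> i x) \<partial>M)"
    by (simp only: prod_eq)
  finally show ?thesis .
qed

lemma (in finite_measure) integral_centered_indicator_orthogonal:
  assumes PD: "product_disintegration M {0, 1} X (bern_rm \<theta>)"
    and \<theta>_meas [measurable]: "\<And>n. \<theta> n \<in> borel_measurable M"
    and \<theta>_bound: "\<And>n x. x \<in> space M \<Longrightarrow> \<bar>\<theta> n x\<bar> \<le> 1"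
    and X_meas [measurable]: "\<And>i. X i \<in> measurable M (count_space UNIV)"
    and X_01: "\<And>i x. x \<in> space M \<Longrightarrow> X i x \<in> {0, 1}"
    and "i \<noteq> j"
  shows "(\<integral>x. (indicator {y. X i y = 1} x - \<theta> i x) * (indicator {y. X j y = 1} x - \<theta> j x) \<partial>M) = 0"
proof -
  define I where "I i x = (indicator {y. X i y = 1} x :: real)" for i x
  have [measurable]: "I i \<in> borel_measurable M" for i
    unfolding I_def by measurable
  have bounded_integrable: "integrable M f"
    if "f \<in> borel_measurable M" "\<And>x. x \<in> space M \<Longrightarrow> \<bar>f x\<bar> \<le> 1" for f :: "'a \<Rightarrow> real"
    using that by (intro integrable_const_bound[where B = 1]) auto
  have I_bound: "\<bar>I i x\<bar> \<le> 1" for i x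
    by (simp add: I_def indicator_def)
  have prod_bound: "\<bar>a * b\<bar> \<le> 1" if "\<bar>a\<bar> \<le> 1" "\<bar>b\<bar> \<le> (1 :: real)" for a b
    using that by (simp add: abs_mult mult_le_one)
  have \<theta>_sigma: "\<theta> n \<in> borel_measurable (sigma_rm M {0, 1} (bern_rm \<theta>))" for n
    by (rule measurable_sigma_rm_bern_rm)
  note bern = integral_mult_prod_indicator_bern_rm[OF PD \<theta>_meas X_meas]
  have "(\<integral>x. I i x * I j x \<partial>M) = (\<integral>x. \<theta> i x * \<theta> j x \<partial>M)"
    using bern[of "\<lambda>_. 1" 1 "{i, j}"] X_01 \<open>i \<noteq> j\<close> by (simp add: I_def)
  moreover have "(\<integral>x. \<theta> j x * I i x \<partial>M) = (\<integral>x. \<theta> i x * \<theta> j x \<partial>M)"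
    using bern[of "\<theta> j" 1 "{i}"] X_01 \<theta>_sigma \<theta>_bound by (simp add: I_def mult.commute)
  moreover have "(\<integral>x. \<theta> i x * I j x \<partial>M) = (\<integral>x. \<theta> i x * \<theta> j x \<partial>M)"
    using bern[of "\<theta> i" 1 "{j}"] X_01 \<theta>_sigma \<theta>_bound by (simp add: I_def)
  moreover have "(\<integral>x. (I i x - \<theta> i x) * (I j x - \<theta> j x) \<partial>M)
      = (\<integral>x. I i x * I j x \<partial>M) - (\<integral>x. \<theta> j x * I i x \<partial>M)
        - (\<integral>x. \<theta> i x * I j x \<partial>M) + (\<integral>x. \<theta> i x * \<theta> j x \<partial>M)"
    by (simp add: algebra_simps bounded_integrable prod_bound I_bound \<theta>_bound)
  ultimately show ?thesis
    by (simp add: I_def)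
qed

lemma (in prob_space) integral_square_sum_orthogonal_le:
  fixes Y :: "nat \<Rightarrow> 'a \<Rightarrow> real"
  assumes [measurable]: "\<And>i. Y i \<in> borel_measurable M"
    and bound: "\<And>i x. x \<in> space M \<Longrightarrow> \<bar>Y i x\<bar> \<le> 1"
    and orth: "\<And>i j. i \<noteq> j \<Longrightarrow> (\<integral>x. Y i x * Y j x \<partial>M) = 0"
  shows "integrable M (\<lambda>x. (\<Sum>i<n. Y i x)^2)" and "(\<integral>x. (\<Sum>i<n. Y i x)^2 \<partial>M) \<le> real n"
proof -
  have square: "(\<Sum>i<n. Y i x)^2 = (\<Sum>i<n. \<Sum>j<n. Y i x * Y j x)" for x
    by (simp add: power2_eq_square sum_product)
  have int: "integrable M (\<lambda>x. Y i x * Y j x)" for i j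
    using bound by (intro integrable_const_bound[where B = 1]) (auto simp: abs_mult intro!: mult_le_one)
  thus "integrable M (\<lambda>x. (\<Sum>i<n. Y i x)^2)"
    unfolding square by auto
  have "(\<integral>x. (\<Sum>i<n. Y i x)^2 \<partial>M) = (\<Sum>i<n. \<Sum>j<n. \<integral>x. Y i x * Y j x \<partial>M)"
    unfolding square using int by simp
  also have "\<dots> = (\<Sum>i<n. \<integral>x. (Y i x)^2 \<partial>M)"
    using orth by (intro sum.cong refl, subst sum.remove) (auto simp: power2_eq_square)
  also have "\<dots> \<le> (\<Sum>i<n. 1)"
  proof (intro sum_mono)
    fix i
    have "(\<integral>x. (Y i x)^2 \<partial>M) \<le> (\<integral>x. 1 \<partial>M)"
      using int[of i i] bound by (intro integral_mono) (auto simp: abs_square_le_1 power2_eq_square[symmetric])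
    thus "(\<integral>x. (Y i x)^2 \<partial>M) \<le> 1" by (simp add: prob_space)
  qed
  finally show "(\<integral>x. (\<Sum>i<n. Y i x)^2 \<partial>M) \<le> real n" by simp
qed

lemma AE_tendsto_zero_of_summable_integral:
  fixes f :: "nat \<Rightarrow> 'a \<Rightarrow> real"
  assumes int: "\<And>m. integrable M (f m)"
    and nonneg: "\<And>m x. x \<in> space M \<Longrightarrow> 0 \<le> f m x"
    and summable: "summable (\<lambda>m. \<integral>x. f m x \<partial>M)"
  shows "AE x in M. (\<lambda>m. f m x) \<longlonglongrightarrow> 0"
proof -
  have [measurable]: "f m \<in> borel_measurable M" for m
    using int by auto
  have "(\<integral>\<^sup>+x. (\<Sum>m. ennreal (f m x)) \<partial>M) = (\<Sum>m. \<integral>\<^sup>+x. ennreal (f m x) \<partial>M)"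
    by (rule nn_integral_suminf) measurable
  also have "\<dots> = (\<Sum>m. ennreal (\<integral>x. f m x \<partial>M))"
    using int nonneg by (simp add: nn_integral_eq_integral)
  also have "\<dots> \<noteq> \<infinity>"
    using summable nonneg by (simp add: ennreal_suminf_neq_top integral_nonneg)
  finally have "AE x in M. (\<Sum>m. ennreal (f m x)) \<noteq> \<infinity>"
    by (intro nn_integral_PInf_AE) auto
  thus ?thesis
    using AE_space
  proof eventually_elim
    case (elim x)
    hence "summable (\<lambda>m. f m x)"
      using nonneg summable_suminf_not_top by (metis infinity_ennreal_def)
    thus ?case
      by (rule summable_LIMSEQ_zero)
  qed
qed

lemma (in prob_space) AE_mean_tendsto_zero_orthogonal:
  fixes Y :: "nat \<Rightarrow> 'a \<Rightarrow> real"
  assumes [measurable]: "\<And>i. Y i \<in> borel_measurable M"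
    and bound: "\<And>i x. x \<in> space M \<Longrightarrow> \<bar>Y i x\<bar> \<le> 1"
    and orth: "\<And>i j. i \<noteq> j \<Longrightarrow> (\<integral>x. Y i x * Y j x \<partial>M) = 0"
  shows "AE x in M. (\<lambda>n. (\<Sum>i<n. Y i x) / real n) \<longlonglongrightarrow> 0"
proof -
  note square_sum = integral_square_sum_orthogonal_le[of Y, OF assms]
  define f where "f k x = ((\<Sum>i<k^2. Y i x) / real (k^2))^2" for k x
  have int: "integrable M (f k)" for k
    unfolding f_def power_divide using square_sum(1) by simp
  have "(\<integral>x. f k x \<partial>M) \<le> inverse (real k ^ 2)" for k
  proof -
    have "(\<integral>x. f k x \<partial>M) = (\<integral>x. (\<Sum>i<k^2. Y i x)^2 \<partial>M) / real k ^ 4"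
      by (simp add: f_def power_divide power_mult[symmetric])
    also have "\<dots> \<le> real (k^2) / real k ^ 4"
      using square_sum(2)[of "k^2"] by (intro divide_right_mono) auto
    also have "\<dots> = inverse (real k ^ 2)"
      by (cases "k = 0") (simp_all add: field_simps power_mult[symmetric])
    finally show ?thesis .
  qed
  hence "summable (\<lambda>k. \<integral>x. f k x \<partial>M)"
    by (intro summable_comparison_test[OF _ inverse_power_summable[of 2]])
       (auto intro!: integral_nonneg simp: f_def)
  hence "AE x in M. (\<lambda>k. f k x) \<longlonglongrightarrow> 0"
    by (intro AE_tendsto_zero_of_summable_integral int) (simp add: f_def)
  thus ?thesis
    using AE_space
  proof eventually_elim
    case (elim x)
    hence "(\<lambda>k. sqrt (f k x)) \<longlonglongrightarrow> 0"
      using tendsto_real_sqrt by fastforce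
    hence "(\<lambda>k. \<bar>(\<Sum>i<k^2. Y i x) / real (k^2)\<bar>) \<longlonglongrightarrow> 0"
      by (simp only: f_def real_sqrt_abs)
    hence "(\<lambda>k. (\<Sum>i<k^2. Y i x) / real (k^2)) \<longlonglongrightarrow> 0"
      by (rule tendsto_rabs_zero_cancel)
    thus ?case
      using bound elim by (intro mean_tendsto_zero_of_mean_squares) auto
  qed
qed

lemma (in prob_space) AE_mean_centered_indicator_tendsto_zero:
  assumes PD: "product_disintegration M {0, 1} X (bern_rm \<theta>)"
    and \<theta>_meas [measurable]: "\<And>n. \<theta> n \<in> borel_measurable M"
    and \<theta>_01: "\<And>n x. x \<in> space M \<Longrightarrow> 0 \<le> \<theta> n x \<and> \<theta> n x \<le> 1"
    and X_meas [measurable]: "\<And>i. X i \<in> measurable M (count_space UNIV)"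
    and X_01: "\<And>i x. x \<in> space M \<Longrightarrow> X i x \<in> {0, 1}"
  shows "AE x in M. (\<lambda>n. (\<Sum>i<n. indicator {y. X i y = 1} x - \<theta> i x) / real n) \<longlonglongrightarrow> 0"
proof (rule AE_mean_tendsto_zero_orthogonal)
  have \<theta>_bound: "\<bar>\<theta> n x\<bar> \<le> 1" if "x \<in> space M" for n x
    using \<theta>_01[OF that] by auto
  show "(\<integral>x. (indicator {y. X i y = 1} x - \<theta> i x) * (indicator {y. X j y = 1} x - \<theta> j x) \<partial>M) = 0"
    if "i \<noteq> j" for i j
    by (rule integral_centered_indicator_orthogonal[OF PD \<theta>_meas \<theta>_bound X_meas X_01 that])
  show "\<bar>indicator {y. X i y = 1} x - \<theta> i x\<bar> \<le> 1" if "x \<in> space M" for i x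
    using \<theta>_01[OF that, of i] by (auto simp: indicator_def)
qed measurable

theorem mainTheorem5:
  fixes M :: "'a measure" and F :: "nat \<Rightarrow> 'a measure"
    and \<theta> :: "nat \<Rightarrow> 'a \<Rightarrow> real" and \<theta>inf :: "'a \<Rightarrow> real"
    and X :: "nat \<Rightarrow> 'a \<Rightarrow> nat"
  assumes "prob_space M"
    and "submartingale M F \<theta>"
    and "\<And>n x. x \<in> space M \<Longrightarrow> 0 \<le> \<theta> n x \<and> \<theta> n x \<le> 1"
    and "\<theta>inf \<in> borel_measurable M"
    and "AE x in M. (\<lambda>n. \<theta> n x) \<longlonglongrightarrow> \<theta>inf x"
    and "\<And>i. X i \<in> measurable M (count_space UNIV)"
    and "\<And>i x. x \<in> space M \<Longrightarrow> X i x \<in> {0, 1}"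
    and "product_disintegration M {0, 1} X (bern_rm \<theta>)"
  shows "AE x in M. (\<lambda>n. (\<Sum>i<n. indicator {y. X i y = 1} x) / real n) \<longlonglongrightarrow> \<theta>inf x"
proof -
  interpret prob_space M by fact
  have "\<theta> n \<in> borel_measurable M" for n
    using assms(2) measurable_from_subalg unfolding submartingale_def by blast
  hence "AE x in M. (\<lambda>n. (\<Sum>i<n. indicator {y. X i y = 1} x - \<theta> i x) / real n) \<longlonglongrightarrow> 0"
    using assms(3,6-8) by (intro AE_mean_centered_indicator_tendsto_zero)
  thus ?thesis
    using assms(5)
  proof eventually_elim
    case (elim x)
    hence "(\<lambda>n. (\<Sum>i<n. indicator {y. X i y = 1} x - \<theta> i x) / real n + (\<Sum>i<n. \<theta> i x) / real n)
        \<longlonglongrightarrow> 0 + \<theta>inf x"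
      by (intro tendsto_add[OF _ cesaro_mean_tendsto])
    thus ?case
      by (simp add: sum_subtractf add_divide_distrib[symmetric])
  qed
qed

end
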